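(* Let $(H,+,\circ)$ be a commutative multiplicative hyperring with identity $1$, and let $P$ be an sdf-absorbing strong $\mathcal{C}$-hyperideal of $H$. Then the following are equivalent: (i) whenever $0\neq x,y\in H$ and $x^2-y^2\subseteq P$, both $x-y\in P$ and $x+y\in P$; (ii) $1+1\in P$; (iii) the quotient hyperring $H/P$ is of characteristic $2$.
   Context: A commutative multiplicative hyperring $(H,+,\circ)$ consists of an abelian group $(H,+)$ and an associative, commutative hyperoperation $\circ: H\times H\to P^*(H)$ with $x\circ(y+z)\subseteq x\circ y+x\circ z$ and $x\circ(-y)=-(x\circ y)=(-x)\circ y$. For subsets $A,B$, $A\circ B=\bigcup_{a\in A,b\in B}a\circ b$, $A\pm B=\{a\pm b\}$; $x^2=x\circ x$. Identity: $x\in x\circ 1$ for all $x$. A hyperideal is a nonempty $P$ with $x-y\in P$ and $r\circ x\subseteq P$ for $x,y\in P$, $r\in H$. The quotient $H/P=\{x+P\}$ has the usual coset addition and $(x+P)*(y+P)=\{z+P: z\in x\circ y\}$. A hyperring has characteristic $\alpha$ if $\alpha$ is the least positive integer with $\alpha x=0$ for all $x$. Let $\mathcal{C}=\{c_1\circ\cdots\circ c_n: c_i\in H,n\in\mathbb{N}\}$ and $\mathfrak{C}=\{\sum_{i=1}^n C_i: C_i\in\mathcal{C}\}$; $P$ is a strong $\mathcal{C}$-hyperideal if for every $D\in\mathfrak{C}$, $D\cap P\neq\varnothing$ implies $D\subseteq P$. A proper hyperideal $P$ is sdf-absorbing if whenever $0\neq x,y\in H$ and $x^2-y^2\subseteq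 P$, then $x-y\in P$ or $x+y\in P$. *)

theory Defs
  imports Main
begin

definition set_plus_h :: "'a::ab_group_add set \<Rightarrow> 'a set \<Rightarrow> 'a set" where
  "set_plus_h A B = {a + b | a b. a \<in> A \<and> b \<in> B}"

definition set_minus_h :: "'a::ab_group_add set \<Rightarrow> 'a set \<Rightarrow> 'a set" where
  "set_minus_h A B = {a - b | a b. a \<in> A \<and> b \<in> B}"

definition hset_mult :: "('a \<Rightarrow> 'a \<Rightarrow> 'a set) \<Rightarrow> 'a set \<Rightarrow> 'a set \<Rightarrow> 'a set" where
  "hset_mult m A B = (\<Union>a\<in>A. \<Union>b\<in>B. m a b)"

definition comm_mult_hyperring :: "('a::ab_group_add \<Rightarrow> 'a \<Rightarrow> 'a set) \<Rightarrow> bool" where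
  "comm_mult_hyperring m \<longleftrightarrow>
     (\<forall>x y. m x y \<noteq> {}) \<and>
     (\<forall>x y z. hset_mult m {x} (m y z) = hset_mult m (m x y) {z}) \<and>
     (\<forall>x y. m x y = m y x) \<and>
     (\<forall>x y z. m x (y + z) \<subseteq> set_plus_h (m x y) (m x z)) \<and>
     (\<forall>x y. m x (- y) = uminus ` (m x y) \<and> m (- x) y = uminus ` (m x y))"

definition hyperring_identity :: "('a \<Rightarrow> 'a \<Rightarrow> 'a set) \<Rightarrow> 'a \<Rightarrow> bool" where
  "hyperring_identity m e \<longleftrightarrow> (\<forall>x. x \<in> m x e)"

definition hyperideal :: "('a::ab_group_add \<Rightarrow> 'a \<Rightarrow> 'a set) \<Rightarrow> 'a set \<Rightarrow> bool" where
  "hyperideal m P \<longleftrightarrow> P \<noteq> {} \<and> (\<forall>x\<in>P. \<forall>y\<in>P. x - y \<in> P) \<and> (\<forall>r x. x \<in> P \<longrightarrow> m r x \<subseteq> P)"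

inductive hprod :: "('a \<Rightarrow> 'a \<Rightarrow> 'a set) \<Rightarrow> 'a set \<Rightarrow> bool" for m where
  single: "hprod m {c}"
| step: "hprod m A \<Longrightarrow> hprod m (hset_mult m A {c})"

inductive hsum :: "('a::ab_group_add \<Rightarrow> 'a \<Rightarrow> 'a set) \<Rightarrow> 'a set \<Rightarrow> bool" for m where
  base: "hprod m A \<Longrightarrow> hsum m A"
| step: "hsum m D \<Longrightarrow> hprod m A \<Longrightarrow> hsum m (set_plus_h D A)"

definition strong_C_hyperideal :: "('a::ab_group_add \<Rightarrow> 'a \<Rightarrow> 'a set) \<Rightarrow> 'a set \<Rightarrow> bool" where
  "strong_C_hyperideal m P \<longleftrightarrow> hyperideal m P \<and>
     (\<forall>D. hsum m D \<longrightarrow> D \<inter> P \<noteq> {} \<longrightarrow> D \<subseteq> P)"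

definition sdf_absorbing :: "('a::ab_group_add \<Rightarrow> 'a \<Rightarrow> 'a set) \<Rightarrow> 'a set \<Rightarrow> bool" where
  "sdf_absorbing m P \<longleftrightarrow> hyperideal m P \<and> P \<noteq> UNIV \<and>
     (\<forall>x y. x \<noteq> 0 \<longrightarrow> y \<noteq> 0 \<longrightarrow> set_minus_h (m x x) (m y y) \<subseteq> P \<longrightarrow>
        x - y \<in> P \<or> x + y \<in> P)"

definition nsmul_gen :: "('b \<Rightarrow> 'b \<Rightarrow> 'b) \<Rightarrow> 'b \<Rightarrow> nat \<Rightarrow> 'b \<Rightarrow> 'b" where
  "nsmul_gen add z n x = ((\<lambda>y. add x y) ^^ n) z"

definition has_char :: "'b set \<Rightarrow> ('b \<Rightarrow> 'b \<Rightarrow> 'b) \<Rightarrow> 'b \<Rightarrow> nat \<Rightarrow> bool" where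
  "has_char C add z \<alpha> \<longleftrightarrow> 0 < \<alpha> \<and> (\<forall>x\<in>C. nsmul_gen add z \<alpha> x = z) \<and>
     (\<forall>\<beta>. 0 < \<beta> \<and> \<beta> < \<alpha> \<longrightarrow> \<not> (\<forall>x\<in>C. nsmul_gen add z \<beta> x = z))"

definition coset :: "'a::ab_group_add set \<Rightarrow> 'a \<Rightarrow> 'a set" where
  "coset P x = {x + p | p. p \<in> P}"

text \<open>Quotient H/P: carrier {x+P}, coset addition (x+P)+(y+P) = (x+y)+P, zero 0+P.
  The hypermultiplication of H/P does not affect its characteristic.\<close>
definition quot_carrier :: "'a::ab_group_add set \<Rightarrow> 'a set set" where
  "quot_carrier P = range (coset P)"

definition quot_add :: "'a::ab_group_add set \<Rightarrow> 'a set \<Rightarrow> 'a set \<Rightarrow> 'a set" where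
  "quot_add P A B = set_plus_h A B"

end

theory Submission
  imports Defs
begin

text \<open>Distributivity makes every product x o (y + z) a nonempty part of the element
  x o y + x o z of \<frakC>; a strong \<C>-hyperideal containing y + z therefore swallows all of
  x o y + x o z. Taking y = z = 1 gives x + x \<in> P for every x as soon as 1 + 1 \<in> P, i.e.
  H/P has characteristic 2, and then x - y and x + y, which differ by y + y, lie in P
  together. Conversely, taking y = -x shows x o x - x o x \<subseteq> P, so condition (i) for
  x = y = 1 yields 1 + 1 \<in> P.\<close>

lemma hyperideal_zero: "hyperideal m P \<Longrightarrow> 0 \<in> P"
  unfolding hyperideal_def by (metis all_not_in_conv diff_self)

lemma hyperideal_diff: "hyperideal m P \<Longrightarrow> x \<in> P \<Longrightarrow> y \<in> P \<Longrightarrow> x - y \<in> P"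
  unfolding hyperideal_def by blast

lemma hyperideal_uminus: "hyperideal m P \<Longrightarrow> x \<in> P \<Longrightarrow> - x \<in> P"
  by (metis diff_0 hyperideal_diff hyperideal_zero)

lemma hyperideal_add: "hyperideal m P \<Longrightarrow> x \<in> P \<Longrightarrow> y \<in> P \<Longrightarrow> x + y \<in> P"
  by (metis diff_minus_eq_add hyperideal_diff hyperideal_uminus)

lemma hyperideal_hmult_subset: "hyperideal m P \<Longrightarrow> x \<in> P \<Longrightarrow> m r x \<subseteq> P"
  unfolding hyperideal_def by blast

lemma hyperideal_diff_iff_add:
  assumes "hyperideal m P" and "y + y \<in> P"
  shows "x - y \<in> P \<longleftrightarrow> x + y \<in> P"
proof -
  have "x + y = (x - y) + (y + y)" and "x - y = (x + y) - (y + y)"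
    by (simp_all add: algebra_simps)
  then show ?thesis
    using assms by (metis hyperideal_add hyperideal_diff)
qed

lemma identity_neq_zero_if_proper:
  assumes "hyperideal m P" and "P \<noteq> UNIV" and "hyperring_identity m one"
  shows "one \<noteq> 0"
proof
  assume "one = 0"
  then have "x \<in> P" for x
    using assms hyperideal_hmult_subset[OF assms(1) hyperideal_zero[OF assms(1)]]
    unfolding hyperring_identity_def by blast
  with \<open>P \<noteq> UNIV\<close> show False by blast
qed

lemma hprod_hmult: "hprod m (m x y)"
  using hprod.step[OF hprod.single, of m x y] by (simp add: hset_mult_def)

lemma hsum_set_plus_h_hmult: "hsum m (set_plus_h (m x y) (m z w))"
  by (rule hsum.step[OF hsum.base[OF hprod_hmult] hprod_hmult])

lemma hmult_nonempty: "comm_mult_hyperring m \<Longrightarrow> m x y \<noteq> {}"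
  unfolding comm_mult_hyperring_def by (elim conjE) simp

lemma hmult_add_subset: "comm_mult_hyperring m \<Longrightarrow> m x (y + z) \<subseteq> set_plus_h (m x y) (m x z)"
  unfolding comm_mult_hyperring_def by (elim conjE) (erule allE)+

lemma hmult_uminus_right: "comm_mult_hyperring m \<Longrightarrow> m x (- y) = uminus ` m x y"
  unfolding comm_mult_hyperring_def by (elim conjE) simp

lemma strong_C_hyperideal_hyperideal: "strong_C_hyperideal m P \<Longrightarrow> hyperideal m P"
  unfolding strong_C_hyperideal_def by (elim conjE)

lemma strong_C_hyperideal_set_plus_h_subset:
  assumes "comm_mult_hyperring m" and "strong_C_hyperideal m P" and "y + z \<in> P"
  shows "set_plus_h (m x y) (m x z) \<subseteq> P"
proof -
  have ideal: "hyperideal m P"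
    using strong_C_hyperideal_hyperideal[OF assms(2)] .
  obtain w where w: "w \<in> m x (y + z)"
    using hmult_nonempty[OF assms(1)] by blast
  then have "w \<in> set_plus_h (m x y) (m x z)"
    using hmult_add_subset[OF assms(1)] by blast
  moreover have "w \<in> P"
    using w hyperideal_hmult_subset[OF ideal assms(3)] by blast
  ultimately show ?thesis
    using assms(2) hsum_set_plus_h_hmult unfolding strong_C_hyperideal_def by blast
qed

lemma strong_C_hyperideal_double:
  assumes "comm_mult_hyperring m" and "hyperring_identity m one"
    and "strong_C_hyperideal m P" and "one + one \<in> P"
  shows "x + x \<in> P"
proof -
  have "x + x \<in> set_plus_h (m x one) (m x one)"
    using assms(2) unfolding hyperring_identity_def set_plus_h_def by blast
  then show ?thesis
    using strong_C_hyperideal_set_plus_h_subset[OF assms(1,3,4)] by blast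
qed

lemma strong_C_hyperideal_square_diff_self:
  assumes "comm_mult_hyperring m" and "strong_C_hyperideal m P"
  shows "set_minus_h (m x x) (m x x) \<subseteq> P"
proof -
  have "set_minus_h (m x x) (m x x) = set_plus_h (m x x) (m x (- x))"
    unfolding hmult_uminus_right[OF assms(1)] set_minus_h_def set_plus_h_def by force
  moreover have "x + - x \<in> P"
    using hyperideal_zero[OF strong_C_hyperideal_hyperideal[OF assms(2)]] by simp
  ultimately show ?thesis
    using strong_C_hyperideal_set_plus_h_subset[OF assms] by simp
qed

lemma coset_plus:
  assumes "hyperideal m P"
  shows "set_plus_h (coset P a) (coset P b) = coset P (a + b)"
proof (rule set_eqI)
  fix z
  have "z \<in> set_plus_h (coset P a) (coset P b)" if "z \<in> coset P (a + b)"
  proof -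
    obtain p where "p \<in> P" "z = (a + p) + (b + 0)"
      using \<open>z \<in> coset P (a + b)\<close> unfolding coset_def by (auto simp: algebra_simps)
    then show ?thesis
      using hyperideal_zero[OF assms] unfolding set_plus_h_def coset_def by blast
  qed
  moreover have "z \<in> coset P (a + b)" if z: "z \<in> set_plus_h (coset P a) (coset P b)"
  proof -
    obtain p q where "p \<in> P" "q \<in> P" "z = (a + p) + (b + q)"
      using z unfolding set_plus_h_def coset_def by blast
    then have "p + q \<in> P" and "z = (a + b) + (p + q)"
      using hyperideal_add[OF assms] by (simp_all add: algebra_simps)
    then show ?thesis
      unfolding coset_def by blast
  qed
  ultimately show "z \<in> set_plus_h (coset P a) (coset P b) \<longleftrightarrow> z \<in> coset P (a + b)"
    by blast
qed

lemma coset_of_mem: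
  assumes "hyperideal m P" and "a \<in> P"
  shows "coset P a = P"
proof (rule set_eqI)
  fix z
  have "z = a + (z - a)"
    by simp
  then show "z \<in> coset P a \<longleftrightarrow> z \<in> P"
    using assms hyperideal_add hyperideal_diff unfolding coset_def by blast
qed

lemma coset_eq_coset_zero_iff:
  assumes "hyperideal m P"
  shows "coset P a = coset P 0 \<longleftrightarrow> a \<in> P"
proof
  have "a \<in> coset P a"
    using hyperideal_zero[OF assms] unfolding coset_def by force
  then show "coset P a = coset P 0 \<Longrightarrow> a \<in> P"
    using coset_of_mem[OF assms hyperideal_zero[OF assms]] by simp
  show "a \<in> P \<Longrightarrow> coset P a = coset P 0"
    using coset_of_mem[OF assms] hyperideal_zero[OF assms] by simp
qed

lemma nsmul_gen_quot_coset:
  assumes "hyperideal m P"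
  shows "nsmul_gen (quot_add P) (coset P 0) n (coset P a) = coset P (nsmul_gen (+) 0 n a)"
  by (induction n) (simp_all add: nsmul_gen_def quot_add_def coset_plus[OF assms])

lemma quot_has_char_2_iff:
  assumes "hyperideal m P" and "P \<noteq> UNIV"
  shows "has_char (quot_carrier P) (quot_add P) (coset P 0) 2 \<longleftrightarrow> (\<forall>x. x + x \<in> P)"
proof -
  have multiple_zero_iff:
    "(\<forall>A\<in>quot_carrier P. nsmul_gen (quot_add P) (coset P 0) n A = coset P 0)
       \<longleftrightarrow> (\<forall>x. nsmul_gen (+) 0 n x \<in> P)" for n
    unfolding quot_carrier_def
    by (simp add: nsmul_gen_quot_coset[OF assms(1)] coset_eq_coset_zero_iff[OF assms(1)])
  have "nsmul_gen (+) 0 1 x = x" and "nsmul_gen (+) 0 2 x = x + x" for x :: 'a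
    by (simp_all add: nsmul_gen_def numeral_2_eq_2)
  moreover have "(\<forall>\<beta>::nat. 0 < \<beta> \<and> \<beta> < 2 \<longrightarrow> R \<beta>) \<longleftrightarrow> R 1" for R
    by (auto dest: less_2_cases)
  ultimately show ?thesis
    unfolding has_char_def multiple_zero_iff using assms(2) by auto
qed

theorem mainTheorem3:
  fixes m :: "'a::ab_group_add \<Rightarrow> 'a \<Rightarrow> 'a set" and one :: 'a and P :: "'a set"
  assumes "comm_mult_hyperring m"
    and "hyperring_identity m one"
    and "sdf_absorbing m P"
    and "strong_C_hyperideal m P"
  shows "((\<forall>x y. x \<noteq> 0 \<longrightarrow> y \<noteq> 0 \<longrightarrow> set_minus_h (m x x) (m y y) \<subseteq> P \<longrightarrow>
             x - y \<in> P \<and> x + y \<in> P) \<longleftrightarrow> one + one \<in> P)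
       \<and> (one + one \<in> P \<longleftrightarrow> has_char (quot_carrier P) (quot_add P) (coset P 0) 2)"
proof -
  have ideal: "hyperideal m P" and proper: "P \<noteq> UNIV"
    using assms(3) unfolding sdf_absorbing_def by auto
  have doubles: "one + one \<in> P \<longleftrightarrow> (\<forall>x. x + x \<in> P)"
    using strong_C_hyperideal_double[OF assms(1,2,4)] by blast
  have "one + one \<in> P"
    if "\<forall>x y. x \<noteq> 0 \<longrightarrow> y \<noteq> 0 \<longrightarrow> set_minus_h (m x x) (m y y) \<subseteq> P \<longrightarrow>
          x - y \<in> P \<and> x + y \<in> P"
    using that identity_neq_zero_if_proper[OF ideal proper assms(2)]
      strong_C_hyperideal_square_diff_self[OF assms(1,4)] by blast
  moreover have "x - y \<in> P \<and> x + y \<in> P"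
    if "one + one \<in> P" and "x \<noteq> 0" "y \<noteq> 0" "set_minus_h (m x x) (m y y) \<subseteq> P" for x y
    using that doubles assms(3) hyperideal_diff_iff_add[OF ideal]
    unfolding sdf_absorbing_def by blast
  ultimately show ?thesis
    unfolding quot_has_char_2_iff[OF ideal proper] doubles by blast
qed

end
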